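(* Let $\phi:[0,1]\to[0,1]$ be concave, $\phi(0)=0$, $\phi(1)=1$, continuous at $0$, with right derivative $\phi'(0)=\infty$. Then the Marcinkiewicz norm $\|\cdot\|_{M_\phi}$ is equivalent to the positive translation equivariant Marcinkiewicz norm $\|\cdot\|_{TM_\phi}$, even though \[ C:=\sup_{t\in(0,1)}\ \inf_{t'\in(0,1]}\ \sup_{0<\alpha\le1}\frac{\phi_{TM,t}(\alpha)}{\phi_{M,t'}(\alpha)}=\infty, \] where $\phi_{TM,t}(x)=\phi(t)x/t$ for $x\le t$ and $\phi_{TM,t}(x)=\frac{1-\phi(t)}{1-t}x+\frac{\phi(t)-t}{1-t}$ for $x>t$, and $\phi_{M,t'}(x)=\phi(t')x/t'$ for $x\le t'$ and $\phi_{M,t'}(x)=\phi(t')$ for $x>t'$.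
   Context: $\Omega=[0,1]$ with Lebesgue measure $\mu$; $X^*(\omega)=\inf\{\lambda\ge0:\mu\{|X|>\lambda\}\le\omega\}$. Marcinkiewicz norm $\|X\|_{M_\phi}=\sup_{0<t\le1}\frac{\phi(t)}{t}\int_0^tX^*\,d\omega$; positive translation equivariant Marcinkiewicz norm $\|X\|_{TM_\phi}=\sup_{0<t<1}\{\frac{\phi(t)}{t}\int_0^tX^*\,d\omega+\frac{\phi(t)-1}{t-1}\int_t^1X^*\,d\omega\}$. Two norms are equivalent if the sets of functions on which they are finite coincide and they are bounded by constant multiples of each other there. *)

theory Defs
  imports "HOL-Analysis.Analysis"
begin

definition Omega :: "real measure" where
  "Omega = lebesgue_on {0..1}"

definition rv :: "(real \<Rightarrow> real) set" where
  "rv = borel_measurable Omega"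

definition rearr :: "(real \<Rightarrow> real) \<Rightarrow> real \<Rightarrow> real" where
  "rearr X w = Inf {l. l \<ge> 0 \<and> measure Omega {v \<in> {0..1}. \<bar>X v\<bar> > l} \<le> w}"

definition rint :: "(real \<Rightarrow> real) \<Rightarrow> real \<Rightarrow> real \<Rightarrow> ennreal" where
  "rint X a b = (\<integral>\<^sup>+ w\<in>{a..b}. ennreal (rearr X w) \<partial>lborel)"

definition M_norm :: "(real \<Rightarrow> real) \<Rightarrow> (real \<Rightarrow> real) \<Rightarrow> ennreal" where
  "M_norm \<phi> X = (SUP t\<in>{0<..1}. ennreal (\<phi> t / t) * rint X 0 t)"

definition TM_norm :: "(real \<Rightarrow> real) \<Rightarrow> (real \<Rightarrow> real) \<Rightarrow> ennreal" where
  "TM_norm \<phi> X = (SUP t\<in>{0<..<1}. ennreal (\<phi> t / t) * rint X 0 t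
                                  + ennreal ((\<phi> t - 1) / (t - 1)) * rint X t 1)"

definition norm_equiv :: "((real \<Rightarrow> real) \<Rightarrow> ennreal) \<Rightarrow> ((real \<Rightarrow> real) \<Rightarrow> ennreal) \<Rightarrow> bool" where
  "norm_equiv N1 N2 \<longleftrightarrow>
     (\<forall>X\<in>rv. N1 X < \<infinity> \<longleftrightarrow> N2 X < \<infinity>) \<and>
     (\<exists>c1 c2::real. c1 > 0 \<and> c2 > 0 \<and>
        (\<forall>X\<in>rv. N1 X < \<infinity> \<longrightarrow> N1 X \<le> ennreal c1 * N2 X \<and> N2 X \<le> ennreal c2 * N1 X))"

definition phiTM :: "(real \<Rightarrow> real) \<Rightarrow> real \<Rightarrow> real \<Rightarrow> real" where
  "phiTM \<phi> t x = (if x \<le> t then \<phi> t * x / t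
                   else (1 - \<phi> t) / (1 - t) * x + (\<phi> t - t) / (1 - t))"

definition phiM :: "(real \<Rightarrow> real) \<Rightarrow> real \<Rightarrow> real \<Rightarrow> real" where
  "phiM \<phi> t x = (if x \<le> t then \<phi> t * x / t else \<phi> t)"

end

theory Submission
  imports Defs
begin

text \<open>Since \<phi> is concave with \<phi>(0) = 0 and \<phi>(1) = 1, we have \<phi>(t) \<ge> t, so the coefficient
  (1 - \<phi>(t))/(1 - t) is at most 1. Each term of the TM-norm is therefore bounded by the M-term at t
  plus the M-term at 1, whence TM \<le> 2 M. Conversely, every M-term with t < 1 is part of a TM-term,
  and the M-term at t = 1 is the limit of the integrals of X* over [0,t] as t \<rightarrow> 1, each of which is
  bounded by the TM-norm.

  For C = \<infinity>, fix K. Continuity at 0 gives d with \<phi> < 1/K on (0,d), and \<phi>'(0) = \<infinity> gives t with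
  \<phi>(t)/t \<ge> K/d. If \<phi>(t') \<le> 1/K, the ratio at \<alpha> = 1 is 1/\<phi>(t') \<ge> K. Otherwise t' \<ge> d, and at
  \<alpha> = min t t' the ratio is (\<phi>(t)/t) / (\<phi>(t')/t') \<ge> (K/d) \<cdot> d.\<close>

lemma concave_on_ge_id:
  assumes "concave_on {0..1} \<phi>" "\<phi> 0 = 0" "\<phi> 1 = 1" "t \<in> {0..1}"
  shows "t \<le> \<phi> t"
  using concave_onD[OF assms(1), of t 0 1] assms by simp

lemma nn_set_integral_Icc_eq_SUP:
  fixes f :: "real \<Rightarrow> ennreal"
  assumes f: "f \<in> borel_measurable borel" and "a < b"
  shows "(\<integral>\<^sup>+x\<in>{a..b}. f x \<partial>lborel) = (SUP t\<in>{a<..<b}. \<integral>\<^sup>+x\<in>{a..t}. f x \<partial>lborel)"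
proof (rule antisym)
  define s :: "nat \<Rightarrow> real" where "s n = b - (b - a) / (real n + 2)" for n
  have s: "s n \<in> {a<..<b}" for n
  proof -
    have "(b - a) / (real n + 2) < (b - a) / 1"
      using \<open>a < b\<close> by (intro divide_strict_left_mono) auto
    then show ?thesis using \<open>a < b\<close> by (auto simp: s_def)
  qed
  have "incseq s"
    using \<open>a < b\<close> by (intro incseq_SucI) (simp add: s_def divide_left_mono)
  have reached: "\<exists>n. x \<le> s n" if "x < b" for x
  proof -
    obtain n :: nat where "(b - a) / (b - x) < real n"
      using reals_Archimedean2 by blast
    then have "(b - a) / (real n + 2) \<le> b - x"
      using \<open>a < b\<close> \<open>x < b\<close> by (simp add: field_simps)
    then show ?thesis unfolding s_def by (intro exI[of _ n]) linarith
  qed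
  have "AE x in lborel. f x * indicator {a..b} x = (SUP n. f x * indicator {a..s n} x)"
    using AE_lborel_singleton[of b]
  proof eventually_elim
    case (elim x)
    show ?case
    proof (cases "x \<in> {a..b}")
      case True
      then obtain n where "x \<le> s n" using reached elim by force
      then have "f x * indicator {a..b} x \<le> (SUP n. f x * indicator {a..s n} x)"
        using True by (intro SUP_upper2[of n]) auto
      moreover have "f x * indicator {a..s n} x \<le> f x * indicator {a..b} x" for n
        using s[of n] by (auto simp: indicator_def)
      ultimately show ?thesis by (blast intro: antisym SUP_least)
    next
      case False
      then have "x \<notin> {a..s n}" for n
        using s[of n] by auto
      then show ?thesis using False by simp
    qed
  qed
  then have "(\<integral>\<^sup>+x\<in>{a..b}. f x \<partial>lborel) = (\<integral>\<^sup>+x. (SUP n. f x * indicator {a..s n} x) \<partial>lborel)"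
    by (rule nn_integral_cong_AE)
  also have "\<dots> = (SUP n. \<integral>\<^sup>+x\<in>{a..s n}. f x \<partial>lborel)"
    using \<open>incseq s\<close> f
    by (intro nn_integral_monotone_convergence_SUP)
       (force simp: incseq_def le_fun_def indicator_def)+
  also have "\<dots> \<le> (SUP t\<in>{a<..<b}. \<integral>\<^sup>+x\<in>{a..t}. f x \<partial>lborel)"
    using s by (intro SUP_least SUP_upper) auto
  finally show "(\<integral>\<^sup>+x\<in>{a..b}. f x \<partial>lborel) \<le> \<dots>" .
  show "(SUP t\<in>{a<..<b}. \<integral>\<^sup>+x\<in>{a..t}. f x \<partial>lborel) \<le> (\<integral>\<^sup>+x\<in>{a..b}. f x \<partial>lborel)"
    by (intro SUP_least nn_integral_mono) (auto simp: indicator_def)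
qed

lemma rv_level_set_measure_le:
  assumes "X \<in> rv" "w > 0"
  shows "\<exists>l\<ge>0. measure Omega {v\<in>{0..1}. \<bar>X v\<bar> > l} \<le> w"
proof -
  define A where "A n = {v\<in>{0..1}. \<bar>X v\<bar> > real n}" for n :: nat
  have "finite_measure Omega"
    unfolding Omega_def by (rule finite_measure_lebesgue_on) auto
  moreover have "range A \<subseteq> sets Omega"
  proof -
    have "A n = {v \<in> space Omega. real n < \<bar>X v\<bar>}" for n
      unfolding A_def Omega_def by simp
    also have "\<dots> n \<in> sets Omega" for n
      using assms(1) unfolding rv_def by measurable
    finally show ?thesis by blast
  qed
  moreover have "decseq A"
    unfolding A_def decseq_def by auto
  ultimately have "(\<lambda>n. measure Omega (A n)) \<longlonglongrightarrow> measure Omega (\<Inter>n. A n)"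
    by (rule finite_measure.finite_Lim_measure_decseq)
  moreover have "(\<Inter>n. A n) = {}"
  proof safe
    fix x assume "x \<in> (\<Inter>n. A n)"
    then have "\<bar>X x\<bar> > real (nat \<lceil>\<bar>X x\<bar>\<rceil>)"
      unfolding A_def by blast
    then show "x \<in> {}" by linarith
  qed
  ultimately have "(\<lambda>n. measure Omega (A n)) \<longlonglongrightarrow> 0"
    by simp
  then obtain n where "measure Omega (A n) < w"
    using \<open>w > 0\<close> by (metis eventually_sequentially order_tendstoD(2) order.refl)
  then show ?thesis
    unfolding A_def by (intro exI[of _ "real n"]) auto
qed

lemma rearr_antimono:
  assumes "X \<in> rv" "0 < w1" "w1 \<le> w2"
  shows "rearr X w2 \<le> rearr X w1"
  unfolding rearr_def
  using rv_level_set_measure_le[OF assms(1,2)] assms(3)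
  by (intro cInf_superset_mono bdd_belowI[of _ 0]) auto

lemma borel_measurable_rearr:
  assumes "X \<in> rv"
  shows "rearr X \<in> borel_measurable borel"
proof -
  have "(\<lambda>w. - rearr X w) \<in> borel_measurable borel"
  proof (rule borel_measurable_piecewise_mono[of "{{..<0}, {0}, {0<..}}"])
    txt \<open>For w < 0 the defining set is empty, so rearr X is the junk constant Inf {} there.\<close>
    have "rearr X w = Inf {}" if "w < 0" for w
      using that unfolding rearr_def
      by (intro arg_cong[of _ _ Inf]) (smt (verit) Collect_empty_eq measure_nonneg)
    then show "mono_on c (\<lambda>w. - rearr X w)" if "c \<in> {{..<0}, {0}, {0<..}}" for c
      using that rearr_antimono[OF assms] by (auto intro!: mono_onI)
  qed auto
  then show ?thesis
    by simp
qed

lemma rint_0_1_eq_SUP: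
  assumes "X \<in> rv"
  shows "rint X 0 1 = (SUP t\<in>{0<..<1}. rint X 0 t)"
  unfolding rint_def using borel_measurable_rearr[OF assms]
  by (intro nn_set_integral_Icc_eq_SUP) auto

lemma M_norm_le_TM_norm:
  assumes "X \<in> rv" and above_id: "\<And>t. t \<in> {0<..<1} \<Longrightarrow> t \<le> \<phi> t" and "\<phi> 1 = 1"
  shows "M_norm \<phi> X \<le> TM_norm \<phi> X"
proof -
  have term_le: "ennreal (\<phi> t / t) * rint X 0 t \<le> TM_norm \<phi> X" if "t \<in> {0<..<1}" for t
    unfolding TM_norm_def by (rule SUP_upper2[OF that]) simp
  have rint_le: "rint X 0 t \<le> TM_norm \<phi> X" if t: "t \<in> {0<..<1}" for t
  proof -
    have "1 \<le> \<phi> t / t"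
      using above_id[OF t] t by simp
    then have "rint X 0 t \<le> ennreal (\<phi> t / t) * rint X 0 t"
      using mult_right_mono[OF ennreal_leI, of 1 "\<phi> t / t" "rint X 0 t"] by simp
    also have "\<dots> \<le> TM_norm \<phi> X"
      by (rule term_le[OF t])
    finally show ?thesis .
  qed
  have rint_1_le: "rint X 0 1 \<le> TM_norm \<phi> X"
    unfolding rint_0_1_eq_SUP[OF assms(1)] by (rule SUP_least[OF rint_le])
  show ?thesis
    unfolding M_norm_def
  proof (rule SUP_least)
    fix t :: real assume "t \<in> {0<..1}"
    then consider "t \<in> {0<..<1}" | "t = 1"
      by fastforce
    then show "ennreal (\<phi> t / t) * rint X 0 t \<le> TM_norm \<phi> X"
      by cases (use term_le rint_1_le \<open>\<phi> 1 = 1\<close> in auto)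
  qed
qed

lemma TM_norm_le_M_norm:
  assumes above_id: "\<And>t. t \<in> {0<..<1} \<Longrightarrow> t \<le> \<phi> t" and "\<phi> 1 = 1"
  shows "TM_norm \<phi> X \<le> 2 * M_norm \<phi> X"
  unfolding TM_norm_def
proof (rule SUP_least)
  fix t :: real assume t: "t \<in> {0<..<1}"
  have lower: "ennreal (\<phi> t / t) * rint X 0 t \<le> M_norm \<phi> X"
    unfolding M_norm_def using t by (intro SUP_upper) auto
  have "(\<phi> t - 1) / (t - 1) \<le> 1"
    using above_id[OF t] t by (simp add: divide_le_eq)
  moreover have "rint X t 1 \<le> rint X 0 1"
    unfolding rint_def using t by (intro nn_integral_mono) (auto simp: indicator_def)
  ultimately have "ennreal ((\<phi> t - 1) / (t - 1)) * rint X t 1 \<le> 1 * rint X 0 1"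
    by (intro mult_mono) (auto simp flip: ennreal_1 intro: ennreal_leI)
  also have "\<dots> \<le> M_norm \<phi> X"
    unfolding M_norm_def using \<open>\<phi> 1 = 1\<close> by (intro SUP_upper2[of 1]) auto
  finally have upper: "ennreal ((\<phi> t - 1) / (t - 1)) * rint X t 1 \<le> M_norm \<phi> X" .
  show "ennreal (\<phi> t / t) * rint X 0 t + ennreal ((\<phi> t - 1) / (t - 1)) * rint X t 1
      \<le> 2 * M_norm \<phi> X"
    using add_mono[OF lower upper] by (simp add: mult_2)
qed

lemma norm_equivI:
  assumes "\<And>X. X \<in> rv \<Longrightarrow> N1 X \<le> N2 X"
    and "\<And>X. X \<in> rv \<Longrightarrow> N2 X \<le> ennreal c * N1 X" and "c > 0"
  shows "norm_equiv N1 N2"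
  unfolding norm_equiv_def
proof (intro conjI ballI)
  fix X assume X: "X \<in> rv"
  show "N1 X < \<infinity> \<longleftrightarrow> N2 X < \<infinity>"
    using assms(1,2)[OF X] ennreal_mult_less_top[of "ennreal c" "N1 X"] by auto
next
  show "\<exists>c1 c2. c1 > 0 \<and> c2 > 0 \<and>
      (\<forall>X\<in>rv. N1 X < \<infinity> \<longrightarrow> N1 X \<le> ennreal c1 * N2 X \<and> N2 X \<le> ennreal c2 * N1 X)"
    using assms by (intro exI[of _ 1] exI[of _ c]) auto
qed

lemma phiTM_at_1: "t < 1 \<Longrightarrow> phiTM \<phi> t 1 = 1"
  unfolding phiTM_def by (simp add: field_simps)

lemma phiM_at_1: "t \<le> 1 \<Longrightarrow> phiM \<phi> t 1 = \<phi> t"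
  unfolding phiM_def by simp

lemma phiTM_div_phiM_below:
  assumes "0 < \<alpha>" "\<alpha> \<le> t" "\<alpha> \<le> t'"
  shows "phiTM \<phi> t \<alpha> / phiM \<phi> t' \<alpha> = (\<phi> t / t) / (\<phi> t' / t')"
  using assms unfolding phiTM_def phiM_def by simp

lemma phiTM_div_phiM_unbounded:
  fixes \<phi> :: "real \<Rightarrow> real"
  assumes pos_le_1: "\<phi> ` {0<..1} \<subseteq> {0<..1}" and "\<phi> 0 = 0"
    and cont: "continuous (at 0 within {0..1}) \<phi>"
    and slope: "filterlim (\<lambda>h. \<phi> h / h) at_top (at_right 0)"
    and "K > 0"
  shows "\<exists>t\<in>{0<..<1}. \<forall>t'\<in>{0<..1}. \<exists>\<alpha>\<in>{0<..1}. K \<le> phiTM \<phi> t \<alpha> / phiM \<phi> t' \<alpha>"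
proof -
  obtain d where "0 < d"
    and near_0: "\<And>s. s \<in> {0..1} \<Longrightarrow> dist s 0 < d \<Longrightarrow> dist (\<phi> s) (\<phi> 0) < 1 / K"
    using cont \<open>K > 0\<close> unfolding continuous_within_eps_delta by (meson divide_pos_pos zero_less_one)
  have small: "\<phi> s < 1 / K" if "s \<in> {0<..1}" "s < d" for s
    using near_0[of s] that \<open>\<phi> 0 = 0\<close> by (auto simp: dist_real_def)
  have "\<forall>\<^sub>F h in at_right 0. K / d \<le> \<phi> h / h"
    using slope unfolding filterlim_at_top by blast
  moreover have "\<forall>\<^sub>F h in at_right (0::real). 0 < h \<and> h < 1"
    using eventually_at_right_real[of 0 1] by simp
  ultimately have "\<forall>\<^sub>F h in at_right 0. K / d \<le> \<phi> h / h \<and> 0 < h \<and> h < 1"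
    by eventually_elim blast
  then obtain t where "K / d \<le> \<phi> t / t" "t \<in> {0<..<1}"
    using eventually_happens'[OF trivial_limit_at_right_real] by auto
  moreover have "\<exists>\<alpha>\<in>{0<..1}. K \<le> phiTM \<phi> t \<alpha> / phiM \<phi> t' \<alpha>" if t': "t' \<in> {0<..1}" for t'
  proof (cases "\<phi> t' \<le> 1 / K")
    case True
    have "0 < \<phi> t'" using pos_le_1 t' by (auto simp: image_subset_iff)
    then have "K \<le> 1 / \<phi> t'" using True \<open>K > 0\<close> by (simp add: field_simps)
    then show ?thesis
      using t' \<open>t \<in> {0<..<1}\<close> by (intro bexI[of _ 1]) (auto simp: phiTM_at_1 phiM_at_1)
  next
    case False
    then have "d \<le> t'" using small[OF t'] by force
    have "0 < \<phi> t'" "\<phi> t' \<le> 1"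
      using pos_le_1 t' by (auto simp: image_subset_iff)
    then have "0 < \<phi> t' / t'" "\<phi> t' / t' \<le> 1 / d"
      using t' \<open>d \<le> t'\<close> \<open>0 < d\<close> by (auto intro: frac_le)
    have "K = (K / d) / (1 / d)" using \<open>0 < d\<close> by simp
    also have "\<dots> \<le> (\<phi> t / t) / (1 / d)"
      using \<open>K / d \<le> \<phi> t / t\<close> \<open>0 < d\<close> by (intro divide_right_mono) auto
    also have "\<dots> \<le> (\<phi> t / t) / (\<phi> t' / t')"
      using \<open>K / d \<le> \<phi> t / t\<close> \<open>K > 0\<close> \<open>0 < d\<close> \<open>0 < \<phi> t' / t'\<close> \<open>\<phi> t' / t' \<le> 1 / d\<close>
      by (intro divide_left_mono mult_pos_pos order.trans[OF less_imp_le[OF divide_pos_pos]]) auto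
    also have "\<dots> = phiTM \<phi> t (min t t') / phiM \<phi> t' (min t t')"
      using \<open>t \<in> {0<..<1}\<close> t' by (simp add: phiTM_div_phiM_below)
    finally show ?thesis
      using \<open>t \<in> {0<..<1}\<close> t' by (intro bexI[of _ "min t t'"]) auto
  qed
  ultimately show ?thesis by blast
qed

lemma SUP_INF_SUP_ereal_eq_infinity:
  fixes f :: "'a \<Rightarrow> 'b \<Rightarrow> 'c \<Rightarrow> real"
  assumes "\<And>K. K > 0 \<Longrightarrow> \<exists>t\<in>A. \<forall>t'\<in>B. \<exists>\<alpha>\<in>C. K \<le> f t t' \<alpha>"
  shows "(SUP t\<in>A. INF t'\<in>B. SUP \<alpha>\<in>C. ereal (f t t' \<alpha>)) = \<infinity>"
proof (rule ereal_top)
  fix K :: real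
  obtain t where "t \<in> A" and t: "\<forall>t'\<in>B. \<exists>\<alpha>\<in>C. max K 1 \<le> f t t' \<alpha>"
    using assms[of "max K 1"] by (auto simp: less_max_iff_disj)
  have "ereal K \<le> (INF t'\<in>B. SUP \<alpha>\<in>C. ereal (f t t' \<alpha>))"
  proof (rule INF_greatest)
    fix t' assume "t' \<in> B"
    then obtain \<alpha> where "\<alpha> \<in> C" "max K 1 \<le> f t t' \<alpha>" using t by blast
    then show "ereal K \<le> (SUP \<alpha>\<in>C. ereal (f t t' \<alpha>))"
      by (intro SUP_upper2[of \<alpha>]) auto
  qed
  then show "ereal K \<le> (SUP t\<in>A. INF t'\<in>B. SUP \<alpha>\<in>C. ereal (f t t' \<alpha>))"
    using \<open>t \<in> A\<close> by (blast intro: SUP_upper2)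
qed

theorem theorem30:
  fixes \<phi> :: "real \<Rightarrow> real"
  assumes "\<phi> ` {0..1} \<subseteq> {0..1}"
    and "concave_on {0..1} \<phi>"
    and "\<phi> 0 = 0" and "\<phi> 1 = 1"
    and "continuous (at 0 within {0..1}) \<phi>"
    and "filterlim (\<lambda>h. (\<phi> h - \<phi> 0) / h) at_top (at_right 0)"
  shows "norm_equiv (M_norm \<phi>) (TM_norm \<phi>) \<and>
         (SUP t\<in>{0<..<1}. INF t'\<in>{0<..1}. SUP \<alpha>\<in>{0<..1}.
             ereal (phiTM \<phi> t \<alpha> / phiM \<phi> t' \<alpha>)) = (\<infinity>::ereal)"
proof
  have above_id: "t \<le> \<phi> t" if "t \<in> {0..1}" for t
    using concave_on_ge_id[OF assms(2-4) that] .
  show "norm_equiv (M_norm \<phi>) (TM_norm \<phi>)"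
    using M_norm_le_TM_norm TM_norm_le_M_norm above_id \<open>\<phi> 1 = 1\<close>
    by (intro norm_equivI[where c = 2]) auto
  have "\<phi> ` {0<..1} \<subseteq> {0<..1}"
    using assms(1) above_id by (force simp: image_subset_iff intro: less_le_trans)
  then show "(SUP t\<in>{0<..<1}. INF t'\<in>{0<..1}. SUP \<alpha>\<in>{0<..1}.
      ereal (phiTM \<phi> t \<alpha> / phiM \<phi> t' \<alpha>)) = \<infinity>"
    using assms(3,5,6) by (intro SUP_INF_SUP_ereal_eq_infinity phiTM_div_phiM_unbounded) auto
qed

end
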